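(* Let $\delta\in[\frac{\sqrt2}{2},1)$ and $p\in(0,1)$. Define $$h(p)=\begin{cases}1-0.5p, & p\in(0,p^{\star}],\\ 1-0.62p, & p\in(p^{\star},1),\end{cases}\qquad C(p)=\begin{cases}\left(\dfrac{\big((2-\delta)^{1-\frac{2}{p}}+2\delta\big)g(p)}{1-\delta}\right)^{p/2}, & p\in(0,p^{\star}],\\[2ex] \left(\dfrac{(2-\delta)^{1-\frac{2}{p}}g(p)+2^{2-\frac{2}{p}}\delta}{1-\delta}\right)^{p/2}, & p\in(p^{\star},1).\end{cases}$$ If $\delta\le h(p)$, then $C(p)<1$.
   Context: $g(p)=\frac{p}{2}(1-\frac{p}{2})^{\frac{2}{p}-1}$ for $p\in(0,1]$. $p^{\star}\approx0.45418$ is the unique solution in $(0,1]$ of $(\frac{p}{2})^{1/2}(2-p)^{\frac1p-\frac12}=1$. *)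

theory Defs
  imports "HOL-Analysis.Analysis"
begin

definition g :: "real \<Rightarrow> real" where
  "g p = (p / 2) * (1 - p / 2) powr (2 / p - 1)"

definition pstar :: real where
  "pstar = (THE p. 0 < p \<and> p \<le> 1 \<and> (p / 2) powr (1/2) * (2 - p) powr (1 / p - 1/2) = 1)"

definition h :: "real \<Rightarrow> real" where
  "h p = (if p \<le> pstar then 1 - 0.5 * p else 1 - 0.62 * p)"

definition C :: "real \<Rightarrow> real \<Rightarrow> real" where
  "C \<delta> p = (if p \<le> pstar
     then (((2 - \<delta>) powr (1 - 2 / p) + 2 * \<delta>) * g p / (1 - \<delta>)) powr (p / 2)
     else (((2 - \<delta>) powr (1 - 2 / p) * g p + 2 powr (2 - 2 / p) * \<delta>) / (1 - \<delta>)) powr (p / 2))"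

end

theory Submission
  imports Defs
begin

text \<open>Put q = p/2, so that 2/p = 1/q and g p = q (1 - q)^(1/q - 1). Since t \<mapsto> t^(p/2) is
  increasing, it suffices that the numerator inside C is below 1 - \<delta>, and \<open>\<delta> \<le> h p\<close> bounds
  1 - \<delta> below by q (resp. 1.24 q). Each branch of C is handled for every p, so the value of
  p* is never needed. The powers are estimated by (1 - q)^m \<le> exp (-q m),
  ((1 - q)/(1 + q))^m \<le> exp (-2 q m) and 2^t \<ge> 1 + t/2, which leaves two numerical
  inequalities between exponentials.\<close>

lemma ln_one_minus_le_ln_one_plus:
  fixes q :: real
  assumes "0 \<le> q" "q < 1"
  shows "ln (1 - q) \<le> ln (1 + q) - 2 * q"
proof -
  let ?f = "\<lambda>t::real. ln (1 + t) - ln (1 - t) - 2 * t"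
  have "?f 0 \<le> ?f q"
  proof (rule DERIV_nonneg_imp_nondecreasing[OF assms(1)])
    fix x assume x: "0 \<le> x" "x \<le> q"
    with assms have pos: "1 + x > 0" "1 - x > 0" by auto
    have "DERIV ?f x :> 1 / (1 + x) + 1 / (1 - x) - 2"
      using pos by (auto intro!: derivative_eq_intros)
    moreover have "1 / (1 + x) + 1 / (1 - x) - 2 = 2 * x\<^sup>2 / ((1 + x) * (1 - x))"
      using pos by (simp add: divide_simps) (simp add: algebra_simps power2_eq_square)
    ultimately show "\<exists>y. DERIV ?f x :> y \<and> y \<ge> 0"
      using pos by fastforce
  qed
  then show ?thesis by simp
qed

lemma one_minus_powr_le_exp:
  fixes q m :: real
  assumes "0 \<le> q" "q < 1" "0 \<le> m"
  shows "(1 - q) powr m \<le> exp (- q * m)"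
proof -
  have "m * ln (1 - q) \<le> m * (- q)"
    using ln_le_minus_one[of "1 - q"] assms by (intro mult_left_mono) auto
  then show ?thesis
    using assms by (simp add: powr_def mult.commute)
qed

lemma one_minus_div_one_plus_powr_le_exp:
  fixes q m :: real
  assumes "0 \<le> q" "q < 1" "0 \<le> m"
  shows "(1 + q) powr (- m) * (1 - q) powr m \<le> exp (- 2 * q * m)"
proof -
  have "(1 + q) powr (- m) * (1 - q) powr m = exp (m * (ln (1 - q) - ln (1 + q)))"
    using assms by (simp add: powr_def algebra_simps flip: exp_add)
  also have "\<dots> \<le> exp (m * (- 2 * q))"
    using ln_one_minus_le_ln_one_plus[OF assms(1,2)] assms(3)
    by (intro exp_mono mult_left_mono) auto
  finally show ?thesis
    by (simp add: mult.commute)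
qed

lemma two_powr_ge_one_plus_half:
  fixes t :: real
  assumes "0 \<le> t"
  shows "1 + t / 2 \<le> 2 powr t"
proof -
  have "1/2 \<le> ln (2::real)"
    using ln_le_minus_one[of "1/2::real"] by (simp add: ln_div)
  then have "1 + t / 2 \<le> 1 + t * ln 2"
    using mult_left_mono[OF _ assms] by fastforce
  also have "\<dots> \<le> 2 powr t"
    using exp_ge_add_one_self[of "t * ln 2"] by (simp add: powr_def)
  finally show ?thesis .
qed

lemma exp_neg_seven_fifths_add_two_exp_neg_one_less_one:
  "exp (- 7/5) + 2 * exp (- 1) < (1::real)"
proof -
  have e: "exp (1::real) \<ge> 2.718"
    using e_approx_32 by (simp add: abs_if split: if_splits)
  have "exp (2/5::real) \<ge> 1.48"
    using exp_lower_Taylor_quadratic[of "2/5::real"] by (simp add: power2_eq_square)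
  then have "exp (- 2/5::real) \<le> 1 / 1.48"
    by (simp add: exp_minus field_simps)
  moreover have "exp (- 7/5::real) = exp (- 1) * exp (- 2/5)"
    by (simp flip: exp_add)
  ultimately have "exp (- 7/5) + 2 * exp (- 1::real) \<le> exp (- 1) * (1 / 1.48 + 2)"
    by (simp add: algebra_simps)
  also have "\<dots> < 1"
    using e by (simp add: exp_minus field_simps)
  finally show ?thesis .
qed

lemma exp_neg_three_quarters_less: "exp (- 3/4) < (0.55::real)"
proof -
  have "exp (3/4::real) \<ge> 2.03"
    using exp_lower_Taylor_quadratic[of "3/4::real"] by (simp add: power2_eq_square)
  then show ?thesis
    by (simp add: exp_minus field_simps)
qed

lemma small_p_numerator_less:
  fixes \<delta> q :: real
  assumes "7/10 < \<delta>" "\<delta> \<le> 1 - q" "0 < q"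
  shows "((2 - \<delta>) powr (1 - 1/q) + 2 * \<delta>) * (q * (1 - q) powr (1/q - 1)) < 1 - \<delta>"
proof -
  define m where "m = 1/q - 1"
  have q: "q < 3/10" and m: "0 \<le> m" "q * m = 1 - q"
    using assms by (auto simp: m_def field_simps)
  have first: "(2 - \<delta>) powr (- m) * (1 - q) powr m \<le> exp (- 7/5)"
  proof -
    have "(2 - \<delta>) powr (- m) \<le> (1 + q) powr (- m)"
      using assms m by (intro powr_mono2') auto
    then have "(2 - \<delta>) powr (- m) * (1 - q) powr m \<le> (1 + q) powr (- m) * (1 - q) powr m"
      by (simp add: mult_right_mono)
    also have "\<dots> \<le> exp (- 2 * (q * m))"
      using one_minus_div_one_plus_powr_le_exp[of q m] q m assms by (simp add: mult.assoc)
    also have "\<dots> \<le> exp (- 7/5)"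
      using m(2) q by simp
    finally show ?thesis .
  qed
  have second: "\<delta> * (1 - q) powr m \<le> exp (- 1)"
  proof -
    have "\<delta> * (1 - q) powr m \<le> (1 - q) * (1 - q) powr m"
      using assms by (intro mult_right_mono) auto
    also have "\<dots> = (1 - q) powr (1 + m)"
      using q by (simp add: powr_add)
    also have "\<dots> = (1 - q) powr (1/q)"
      by (simp add: m_def)
    also have "\<dots> \<le> exp (- 1)"
      using one_minus_powr_le_exp[of q "1/q"] assms q by simp
    finally show ?thesis .
  qed
  have "((2 - \<delta>) powr (1 - 1/q) + 2 * \<delta>) * (q * (1 - q) powr (1/q - 1))
      = q * ((2 - \<delta>) powr (- m) * (1 - q) powr m + 2 * (\<delta> * (1 - q) powr m))"
    by (simp add: m_def algebra_simps)
  also have "\<dots> \<le> q * (exp (- 7/5) + 2 * exp (- 1))"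
    using first second assms by (intro mult_left_mono add_mono) auto
  also have "\<dots> < q * 1"
    using exp_neg_seven_fifths_add_two_exp_neg_one_less_one assms
    by (intro mult_strict_left_mono) auto
  also have "\<dots> \<le> 1 - \<delta>"
    using assms by simp
  finally show ?thesis .
qed

lemma two_powr_two_minus_inverse_mul_le:
  fixes q :: real
  assumes "0 < q" "q < 1/4"
  shows "2 powr (2 - 1/q) * (1 - 1.24 * q) \<le> 0.69 * q"
proof -
  have "(1 - 2 * q) / (2 * q) = 1 + (1/q - 4) / 2"
    using assms by (simp add: field_simps)
  also have "\<dots> \<le> 2 powr (1/q - 4)"
    using assms by (intro two_powr_ge_one_plus_half) (simp add: field_simps)
  finally have lower: "(1 - 2 * q) / (2 * q) \<le> 2 powr (1/q - 4)" .
  have "2 powr (2 - 1/q) * 2 powr (1/q - 4) = (2::real) powr (- 2)"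
    by (simp flip: powr_add)
  then have "2 powr (2 - 1/q) = 1 / (4 * 2 powr (1/q - 4))"
    by (simp add: powr_minus field_simps)
  also have "\<dots> \<le> 1 / (4 * ((1 - 2 * q) / (2 * q)))"
    using lower assms by (intro divide_left_mono mult_left_mono mult_pos_pos) auto
  also have "\<dots> = q / (2 * (1 - 2 * q))"
    using assms by (simp add: field_simps)
  finally have "2 powr (2 - 1/q) * (1 - 1.24 * q) \<le> q / (2 * (1 - 2 * q)) * (1 - 1.24 * q)"
    using assms by (intro mult_right_mono) auto
  also have "\<dots> \<le> 0.69 * q"
    using assms by (simp add: field_simps)
  finally show ?thesis .
qed

lemma large_p_numerator_less:
  fixes \<delta> q :: real
  assumes "7/10 < \<delta>" "\<delta> \<le> 1 - 1.24 * q" "0 < q"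
  shows "(2 - \<delta>) powr (1 - 1/q) * (q * (1 - q) powr (1/q - 1)) + 2 powr (2 - 1/q) * \<delta> < 1 - \<delta>"
proof -
  define m where "m = 1/q - 1"
  have q: "q < 1/4" and m: "0 \<le> m" "q * m = 1 - q"
    using assms by (auto simp: m_def field_simps)
  have "(2 - \<delta>) powr (- m) \<le> 1 powr (- m)"
    using assms m by (intro powr_mono2') auto
  moreover have "(1 - q) powr m \<le> exp (- 3/4)"
  proof -
    have "(1 - q) powr m \<le> exp (- (q * m))"
      using one_minus_powr_le_exp[of q m] assms q m by simp
    also have "\<dots> \<le> exp (- 3/4)"
      using m(2) q by simp
    finally show ?thesis .
  qed
  ultimately have "(2 - \<delta>) powr (- m) * (1 - q) powr m \<le> exp (- 3/4)"
    using mult_mono[of "(2 - \<delta>) powr (- m)" 1 "(1 - q) powr m" "exp (- 3/4)"] by simp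
  then have first: "(2 - \<delta>) powr (1 - 1/q) * (q * (1 - q) powr (1/q - 1)) \<le> q * exp (- 3/4)"
    using assms by (simp add: m_def mult.left_commute)
  have "2 powr (2 - 1/q) * \<delta> \<le> 2 powr (2 - 1/q) * (1 - 1.24 * q)"
    using assms by simp
  also have "\<dots> \<le> 0.69 * q"
    using two_powr_two_minus_inverse_mul_le assms q by blast
  finally have second: "2 powr (2 - 1/q) * \<delta> \<le> 0.69 * q" .
  have third: "q * exp (- 3/4) < q * 0.55"
    using exp_neg_three_quarters_less assms by simp
  have decimals: "(0.55::real) = 11/20" "(0.69::real) = 69/100" "(1.24::real) = 31/25"
    by simp_all
  show ?thesis
    using first second third assms unfolding decimals by linarith
qed

lemma powr_less_one_of_less_one:
  fixes x a :: real
  assumes "0 \<le> x" "x < 1" "0 < a"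
  shows "x powr a < 1"
  using powr_less_mono2[OF assms(3,1,2)] by simp

theorem lemma1:
  fixes \<delta> p :: real
  assumes "sqrt 2 / 2 \<le> \<delta>" and "\<delta> < 1"
    and "0 < p" and "p < 1"
    and "\<delta> \<le> h p"
  shows "C \<delta> p < 1"
proof -
  define q where "q = p / 2"
  have q: "0 < q" "2 / p = 1 / q"
    using assms(3) by (simp_all add: q_def)
  have g: "g p = q * (1 - q) powr (1/q - 1)"
    by (simp add: g_def q_def)
  have "sqrt 2 > 1.4"
    by (rule real_less_rsqrt) (simp add: power2_eq_square)
  then have \<delta>: "7/10 < \<delta>"
    using assms(1) by simp
  show ?thesis
  proof (cases "p \<le> pstar")
    case True
    then have "((2 - \<delta>) powr (1 - 2/p) + 2 * \<delta>) * g p < 1 - \<delta>"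
      using small_p_numerator_less[OF \<delta> _ q(1)] assms(5) by (simp add: h_def q_def g)
    then show ?thesis
      using True assms q \<delta> by (simp add: C_def g powr_less_one_of_less_one)
  next
    case False
    then have "(2 - \<delta>) powr (1 - 2/p) * g p + 2 powr (2 - 2/p) * \<delta> < 1 - \<delta>"
      using large_p_numerator_less[OF \<delta> _ q(1)] assms(5) by (simp add: h_def q_def g)
    then show ?thesis
      using False assms q \<delta> by (simp add: C_def g powr_less_one_of_less_one)
  qed
qed

end
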